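(* Let $\mathbf{C}$ be a category of $\mathbf{FI}$ type and $c_1,c_2$ objects. There is a natural isomorphism of functors $\mathbf{C}\to\mathbf{Set}$ $$\mathrm{Hom}(c_1,\bullet)\times\mathrm{Hom}(c_2,\bullet)\;\cong\;\coprod_{[d]}\mathrm{Hom}(d,\bullet)\times_{G_d}\mathrm{PO}_d(c_1,c_2),$$ where $[d]$ ranges over isomorphism classes of objects and $d$ is a chosen representative of $[d]$, and this isomorphism respects the right actions of $G_{c_1}\times G_{c_2}$ by precomposition on both sides.
   Context: A category $\mathbf{C}$ is of $\mathbf{FI}$ type if: (1) all Hom-sets are finite; (2) every morphism is a monomorphism and every endomorphism is an isomorphism; (3) for all objects $c,d$ the group $G_d=\mathrm{Aut}_{\mathbf{C}}(d)$ acts transitively on $\mathrm{Hom}_{\mathbf{C}}(c,d)$; (4) for every $d$ only finitely many isomorphism classes of $c$ have $\mathrm{Hom}(c,d)\neq\emptyset$; (5) every pair $c_1\to d\leftarrow c_2$ has a pullback, and every pair $f_i:p\to c_i$ has a weak push-out, i.e. a commutative square $g_i:c_i\to d$ ($g_1f_1=g_2f_2$) which is a pullback square and such that for every other pullback square $h_i:c_i\to z$ with $h_1f_1=h_2f_2$ there is a unique $h:d\to z$ with $hg_i=h_i$. The push-out set $\mathrm{PO}_d(c_1,c_2)$ is the set of pairs of morphisms $(g_1:c_1\to d,\ g_2:c_2\to d)$ such that the pullback square of $g_1,g_2$ (with corner $c_1\times_d c_2$) is a weak push-out square. $G_d$ acts on it on the left by postcomposition, and $G_{c_1}\times G_{c_2}$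 on the right by precomposition. $\mathrm{Hom}(d,x)\times_{G_d}\mathrm{PO}_d(c_1,c_2)$ is the quotient of the product by $(f\circ g,(r_1,r_2))\sim(f,(g\circ r_1,g\circ r_2))$ for $g\in G_d$. *)

theory Defs
  imports Main
begin

text \<open>A (small) category given by a set of objects, hom-sets, composition and identities.
  cmp C g f denotes the composite g after f.\<close>
record ('o, 'm) category =
  obj :: "'o set"
  hom :: "'o \<Rightarrow> 'o \<Rightarrow> 'm set"
  cmp :: "'m \<Rightarrow> 'm \<Rightarrow> 'm"
  idm :: "'o \<Rightarrow> 'm"

definition is_category :: "('o, 'm, 'x) category_scheme \<Rightarrow> bool" where
  "is_category C \<longleftrightarrow>
     (\<forall>a\<in>obj C. idm C a \<in> hom C a a) \<and>
     (\<forall>a\<in>obj C. \<forall>b\<in>obj C. \<forall>c\<in>obj C. \<forall>f\<in>hom C a b. \<forall>g\<in>hom C b c.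
         cmp C g f \<in> hom C a c) \<and>
     (\<forall>a\<in>obj C. \<forall>b\<in>obj C. \<forall>c\<in>obj C. \<forall>d\<in>obj C.
        \<forall>f\<in>hom C a b. \<forall>g\<in>hom C b c. \<forall>h\<in>hom C c d.
         cmp C h (cmp C g f) = cmp C (cmp C h g) f) \<and>
     (\<forall>a\<in>obj C. \<forall>b\<in>obj C. \<forall>f\<in>hom C a b.
         cmp C f (idm C a) = f \<and> cmp C (idm C b) f = f) \<and>
     (\<forall>a b. (a \<notin> obj C \<or> b \<notin> obj C) \<longrightarrow> hom C a b = {}) \<and>
     (\<forall>a b a' b'. (a, b) \<noteq> (a', b') \<longrightarrow> hom C a b \<inter> hom C a' b' = {})"

definition is_iso :: "('o, 'm, 'x) category_scheme \<Rightarrow> 'o \<Rightarrow> 'o \<Rightarrow> 'm \<Rightarrow> bool" where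
  "is_iso C a b f \<longleftrightarrow> f \<in> hom C a b \<and>
     (\<exists>g\<in>hom C b a. cmp C g f = idm C a \<and> cmp C f g = idm C b)"

definition iso_objs :: "('o, 'm, 'x) category_scheme \<Rightarrow> 'o \<Rightarrow> 'o \<Rightarrow> bool" where
  "iso_objs C a b \<longleftrightarrow> (\<exists>f. is_iso C a b f)"

definition Aut :: "('o, 'm, 'x) category_scheme \<Rightarrow> 'o \<Rightarrow> 'm set" where
  "Aut C d = {g. is_iso C d d g}"

definition iso_class :: "('o, 'm, 'x) category_scheme \<Rightarrow> 'o \<Rightarrow> 'o set" where
  "iso_class C c = {c' \<in> obj C. iso_objs C c c'}"

definition is_pullback ::
  "('o, 'm, 'x) category_scheme \<Rightarrow> 'o \<Rightarrow> 'o \<Rightarrow> 'o \<Rightarrow> 'o \<Rightarrow> 'm \<Rightarrow> 'm \<Rightarrow> 'm \<Rightarrow> 'm \<Rightarrow> bool" where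
  "is_pullback C p c1 c2 d f1 f2 g1 g2 \<longleftrightarrow>
     p \<in> obj C \<and> c1 \<in> obj C \<and> c2 \<in> obj C \<and> d \<in> obj C \<and>
     f1 \<in> hom C p c1 \<and> f2 \<in> hom C p c2 \<and> g1 \<in> hom C c1 d \<and> g2 \<in> hom C c2 d \<and>
     cmp C g1 f1 = cmp C g2 f2 \<and>
     (\<forall>q\<in>obj C. \<forall>u1\<in>hom C q c1. \<forall>u2\<in>hom C q c2. cmp C g1 u1 = cmp C g2 u2 \<longrightarrow>
        (\<exists>!u. u \<in> hom C q p \<and> cmp C f1 u = u1 \<and> cmp C f2 u = u2))"

definition is_weak_pushout ::
  "('o, 'm, 'x) category_scheme \<Rightarrow> 'o \<Rightarrow> 'o \<Rightarrow> 'o \<Rightarrow> 'o \<Rightarrow> 'm \<Rightarrow> 'm \<Rightarrow> 'm \<Rightarrow> 'm \<Rightarrow> bool" where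
  "is_weak_pushout C p c1 c2 d f1 f2 g1 g2 \<longleftrightarrow>
     is_pullback C p c1 c2 d f1 f2 g1 g2 \<and>
     (\<forall>z\<in>obj C. \<forall>h1\<in>hom C c1 z. \<forall>h2\<in>hom C c2 z.
        is_pullback C p c1 c2 z f1 f2 h1 h2 \<longrightarrow>
        (\<exists>!h. h \<in> hom C d z \<and> cmp C h g1 = h1 \<and> cmp C h g2 = h2))"

definition FI_type :: "('o, 'm, 'x) category_scheme \<Rightarrow> bool" where
  "FI_type C \<longleftrightarrow> is_category C \<and>
     \<comment> \<open>(1) finite hom-sets\<close>
     (\<forall>c\<in>obj C. \<forall>d\<in>obj C. finite (hom C c d)) \<and>
     \<comment> \<open>(2) every morphism is a monomorphism, every endomorphism an isomorphism\<close>
     (\<forall>b\<in>obj C. \<forall>c\<in>obj C. \<forall>d\<in>obj C. \<forall>f\<in>hom C c d. \<forall>g\<in>hom C b c. \<forall>h\<in>hom C b c.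
         cmp C f g = cmp C f h \<longrightarrow> g = h) \<and>
     (\<forall>d\<in>obj C. \<forall>f\<in>hom C d d. is_iso C d d f) \<and>
     \<comment> \<open>(3) G_d acts transitively on Hom(c,d)\<close>
     (\<forall>c\<in>obj C. \<forall>d\<in>obj C. \<forall>f\<in>hom C c d. \<forall>f'\<in>hom C c d. \<exists>g\<in>Aut C d. cmp C g f = f') \<and>
     \<comment> \<open>(4) finitely many isomorphism classes map to each object\<close>
     (\<forall>d\<in>obj C. finite (iso_class C ` {c \<in> obj C. hom C c d \<noteq> {}})) \<and>
     \<comment> \<open>(5) pullbacks\<close>
     (\<forall>c1\<in>obj C. \<forall>c2\<in>obj C. \<forall>d\<in>obj C. \<forall>g1\<in>hom C c1 d. \<forall>g2\<in>hom C c2 d.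
         \<exists>p f1 f2. is_pullback C p c1 c2 d f1 f2 g1 g2) \<and>
     \<comment> \<open>(5) weak push-outs\<close>
     (\<forall>p\<in>obj C. \<forall>c1\<in>obj C. \<forall>c2\<in>obj C. \<forall>f1\<in>hom C p c1. \<forall>f2\<in>hom C p c2.
         \<exists>d g1 g2. is_weak_pushout C p c1 c2 d f1 f2 g1 g2)"

definition PO :: "('o, 'm, 'x) category_scheme \<Rightarrow> 'o \<Rightarrow> 'o \<Rightarrow> 'o \<Rightarrow> ('m \<times> 'm) set" where
  "PO C d c1 c2 = {(g1, g2). g1 \<in> hom C c1 d \<and> g2 \<in> hom C c2 d \<and>
      (\<exists>p f1 f2. is_pullback C p c1 c2 d f1 f2 g1 g2 \<and>
                 is_weak_pushout C p c1 c2 d f1 f2 g1 g2)}"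

text \<open>The relation defining Hom(d,x) \<times>_{G_d} PO_d(c1,c2):
  (f g, (r1, r2)) ~ (f, (g r1, g r2)) for g in G_d.\<close>
definition bal_rel :: "('o, 'm, 'x) category_scheme \<Rightarrow> 'o \<Rightarrow> 'o \<Rightarrow> 'o \<Rightarrow> 'o \<Rightarrow>
    (('m \<times> ('m \<times> 'm)) \<times> ('m \<times> ('m \<times> 'm))) set" where
  "bal_rel C d x c1 c2 = {((h, (r1, r2)), (h', (r1', r2'))).
      (h, (r1, r2)) \<in> hom C d x \<times> PO C d c1 c2 \<and> (h', (r1', r2')) \<in> hom C d x \<times> PO C d c1 c2 \<and>
      (\<exists>g\<in>Aut C d. h = cmp C h' g \<and> r1' = cmp C g r1 \<and> r2' = cmp C g r2)}"

definition balanced_prod :: "('o, 'm, 'x) category_scheme \<Rightarrow> 'o \<Rightarrow> 'o \<Rightarrow> 'o \<Rightarrow> 'o \<Rightarrow>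
    ('m \<times> ('m \<times> 'm)) set set" where
  "balanced_prod C d x c1 c2 = (hom C d x \<times> PO C d c1 c2) // bal_rel C d x c1 c2"

definition bal_class :: "('o, 'm, 'x) category_scheme \<Rightarrow> 'o \<Rightarrow> 'o \<Rightarrow> 'o \<Rightarrow> 'o \<Rightarrow>
    'm \<times> ('m \<times> 'm) \<Rightarrow> ('m \<times> ('m \<times> 'm)) set" where
  "bal_class C d x c1 c2 a = bal_rel C d x c1 c2 `` {a}"

definition rep_system :: "('o, 'm, 'x) category_scheme \<Rightarrow> 'o set \<Rightarrow> bool" where
  "rep_system C R \<longleftrightarrow> R \<subseteq> obj C \<and>
     (\<forall>c\<in>obj C. \<exists>d\<in>R. iso_objs C c d) \<and>
     (\<forall>d\<in>R. \<forall>d'\<in>R. iso_objs C d d' \<longrightarrow> d = d')"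

definition coprod_PO :: "('o, 'm, 'x) category_scheme \<Rightarrow> 'o set \<Rightarrow> 'o \<Rightarrow> 'o \<Rightarrow> 'o \<Rightarrow>
    ('o \<times> ('m \<times> ('m \<times> 'm)) set) set" where
  "coprod_PO C R c1 c2 x = (SIGMA d:R. balanced_prod C d x c1 c2)"

end

theory Submission
  imports Defs
begin

text \<open>Given a1 : c1 \<rightarrow> x and a2 : c2 \<rightarrow> x, take the pullback p of (a1, a2) and a weak
  push-out d of its two projections. The universal property of d factors (a1, a2) as h \<circ> (r1, r2)
  with (r1, r2) \<in> PO_d(c1, c2), and d can be moved to its chosen representative along an
  isomorphism. Since postcomposing with a monomorphism does not change pullback squares, two such
  factorizations through PO_d and PO_d' have the same pullback square, so the universal properties
  of the two weak push-outs give mutually inverse maps between d and d': the factorization is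
  unique up to the action of G_d.\<close>

locale small_category =
  fixes C :: "('o, 'm) category"
  assumes is_category: "is_category C"
begin

lemma hom_objs: "f \<in> hom C a b \<Longrightarrow> a \<in> obj C \<and> b \<in> obj C"
  using is_category unfolding is_category_def by blast

lemma comp_closed: "f \<in> hom C a b \<Longrightarrow> g \<in> hom C b c \<Longrightarrow> cmp C g f \<in> hom C a c"
  using is_category hom_objs unfolding is_category_def by meson

lemma comp_assoc:
  "f \<in> hom C a b \<Longrightarrow> g \<in> hom C b c \<Longrightarrow> h \<in> hom C c d \<Longrightarrow>
   cmp C h (cmp C g f) = cmp C (cmp C h g) f"
  using is_category hom_objs unfolding is_category_def by meson

lemma idm_closed: "a \<in> obj C \<Longrightarrow> idm C a \<in> hom C a a"
  using is_category unfolding is_category_def by simp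

lemma comp_idm_left: "f \<in> hom C a b \<Longrightarrow> cmp C (idm C b) f = f"
  using is_category hom_objs unfolding is_category_def by blast

lemma comp_idm_right: "f \<in> hom C a b \<Longrightarrow> cmp C f (idm C a) = f"
  using is_category hom_objs unfolding is_category_def by blast

definition inverse_pair :: "'o \<Rightarrow> 'o \<Rightarrow> 'm \<Rightarrow> 'm \<Rightarrow> bool" where
  "inverse_pair a b s t \<longleftrightarrow> s \<in> hom C a b \<and> t \<in> hom C b a \<and>
     cmp C t s = idm C a \<and> cmp C s t = idm C b"

lemma inverse_pair_sym: "inverse_pair a b s t \<Longrightarrow> inverse_pair b a t s"
  unfolding inverse_pair_def by blast

lemma is_iso_iff_inverse_pair: "is_iso C a b s \<longleftrightarrow> (\<exists>t. inverse_pair a b s t)"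
  unfolding is_iso_def inverse_pair_def by blast

lemma inverse_pair_cancel_left:
  assumes "inverse_pair b c s t" and "v \<in> hom C a b"
  shows "cmp C t (cmp C s v) = v"
proof -
  have "s \<in> hom C b c" "t \<in> hom C c b" "cmp C t s = idm C b"
    using assms(1) unfolding inverse_pair_def by blast+
  then show ?thesis using comp_assoc[OF assms(2)] comp_idm_left[OF assms(2)] by simp
qed

lemma inverse_pair_comp_left_eq:
  assumes st: "inverse_pair b c s t" and v: "v \<in> hom C a b" and u: "u \<in> hom C a c"
  shows "cmp C s v = u \<longleftrightarrow> v = cmp C t u"
  using inverse_pair_cancel_left[OF st v] inverse_pair_cancel_left[OF inverse_pair_sym[OF st] u] by metis

lemma inverse_pair_comp_right_eq:
  assumes st: "inverse_pair a b s t" and k: "k \<in> hom C b z" and h: "h \<in> hom C a z"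
  shows "cmp C k s = h \<longleftrightarrow> k = cmp C h t"
proof -
  have s: "s \<in> hom C a b" and t: "t \<in> hom C b a"
    and ts: "cmp C t s = idm C a" and st': "cmp C s t = idm C b"
    using st unfolding inverse_pair_def by blast+
  have "cmp C (cmp C k s) t = k" using comp_assoc[OF t s k] st' comp_idm_right[OF k] by simp
  moreover have "cmp C (cmp C h t) s = h" using comp_assoc[OF s t h] ts comp_idm_right[OF h] by simp
  ultimately show ?thesis by metis
qed

lemma Aut_iff_inverse_pair: "g \<in> Aut C d \<longleftrightarrow> (\<exists>g'. inverse_pair d d g g')"
  unfolding Aut_def is_iso_iff_inverse_pair by simp

lemma Aut_hom: "g \<in> Aut C d \<Longrightarrow> g \<in> hom C d d"
  unfolding Aut_iff_inverse_pair inverse_pair_def by blast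

lemma Aut_inverse:
  assumes "g \<in> Aut C d"
  obtains g' where "g' \<in> Aut C d" "inverse_pair d d g g'"
  using assms inverse_pair_sym unfolding Aut_iff_inverse_pair by blast

lemma idm_Aut: "d \<in> obj C \<Longrightarrow> idm C d \<in> Aut C d"
  unfolding Aut_iff_inverse_pair inverse_pair_def using idm_closed comp_idm_left by blast

lemma comp_Aut:
  assumes g: "g \<in> Aut C d" and k: "k \<in> Aut C d"
  shows "cmp C g k \<in> Aut C d"
proof -
  obtain g' where g': "inverse_pair d d g g'" using g Aut_inverse by blast
  obtain k' where k': "inverse_pair d d k k'" using k Aut_inverse by blast
  have homs: "g \<in> hom C d d" "g' \<in> hom C d d" "k \<in> hom C d d" "k' \<in> hom C d d"
    using g' k' unfolding inverse_pair_def by blast+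
  have "cmp C (cmp C k' g') (cmp C g k) = cmp C k' (cmp C (cmp C g' g) k)"
    using comp_assoc[OF homs(3,1,2)] comp_assoc[OF comp_closed[OF homs(3,1)] homs(2,4)] by simp
  also have "\<dots> = idm C d"
    using g' k' comp_idm_left[OF homs(3)] unfolding inverse_pair_def by simp
  finally have left: "cmp C (cmp C k' g') (cmp C g k) = idm C d" .
  have "cmp C (cmp C g k) (cmp C k' g') = cmp C g (cmp C (cmp C k k') g')"
    using comp_assoc[OF homs(2,4,3)] comp_assoc[OF comp_closed[OF homs(2,4)] homs(3,1)] by simp
  also have "\<dots> = idm C d"
    using g' k' comp_idm_left[OF homs(2)] unfolding inverse_pair_def by simp
  finally have right: "cmp C (cmp C g k) (cmp C k' g') = idm C d" .
  show ?thesis unfolding Aut_iff_inverse_pair inverse_pair_def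
    using comp_closed homs left right by blast
qed

lemma is_pullbackI:
  assumes f: "f1 \<in> hom C p c1" "f2 \<in> hom C p c2" and g: "g1 \<in> hom C c1 d" "g2 \<in> hom C c2 d"
    and comm: "cmp C g1 f1 = cmp C g2 f2"
    and univ: "\<And>q u1 u2. u1 \<in> hom C q c1 \<Longrightarrow> u2 \<in> hom C q c2 \<Longrightarrow> cmp C g1 u1 = cmp C g2 u2 \<Longrightarrow>
           \<exists>!u. u \<in> hom C q p \<and> cmp C f1 u = u1 \<and> cmp C f2 u = u2"
  shows "is_pullback C p c1 c2 d f1 f2 g1 g2"
proof -
  have "p \<in> obj C" "c1 \<in> obj C" "c2 \<in> obj C" "d \<in> obj C" using f g hom_objs by blast+
  then show ?thesis unfolding is_pullback_def using f g comm univ by simp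
qed

lemma is_pullbackD:
  assumes pb: "is_pullback C p c1 c2 d f1 f2 g1 g2"
  shows "f1 \<in> hom C p c1" "f2 \<in> hom C p c2" "g1 \<in> hom C c1 d" "g2 \<in> hom C c2 d"
    and "cmp C g1 f1 = cmp C g2 f2"
    and "\<And>q u1 u2. u1 \<in> hom C q c1 \<Longrightarrow> u2 \<in> hom C q c2 \<Longrightarrow> cmp C g1 u1 = cmp C g2 u2 \<Longrightarrow>
           \<exists>!u. u \<in> hom C q p \<and> cmp C f1 u = u1 \<and> cmp C f2 u = u2"
proof -
  show "f1 \<in> hom C p c1" "f2 \<in> hom C p c2" "g1 \<in> hom C c1 d" "g2 \<in> hom C c2 d"
    and "cmp C g1 f1 = cmp C g2 f2"
    using pb unfolding is_pullback_def by simp_all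
  fix q u1 u2
  assume "u1 \<in> hom C q c1" "u2 \<in> hom C q c2" "cmp C g1 u1 = cmp C g2 u2"
  moreover have "q \<in> obj C" using \<open>u1 \<in> hom C q c1\<close> hom_objs by blast
  ultimately show "\<exists>!u. u \<in> hom C q p \<and> cmp C f1 u = u1 \<and> cmp C f2 u = u2"
    using pb unfolding is_pullback_def by simp
qed

lemma is_weak_pushoutI:
  assumes "is_pullback C p c1 c2 d f1 f2 g1 g2"
    and "\<And>z h1 h2. is_pullback C p c1 c2 z f1 f2 h1 h2 \<Longrightarrow>
           \<exists>!h. h \<in> hom C d z \<and> cmp C h g1 = h1 \<and> cmp C h g2 = h2"
  shows "is_weak_pushout C p c1 c2 d f1 f2 g1 g2"
  unfolding is_weak_pushout_def using assms by simp

lemma is_weak_pushoutD: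
  assumes wpo: "is_weak_pushout C p c1 c2 d f1 f2 g1 g2"
  shows "is_pullback C p c1 c2 d f1 f2 g1 g2"
    and "\<And>z h1 h2. is_pullback C p c1 c2 z f1 f2 h1 h2 \<Longrightarrow>
           \<exists>!h. h \<in> hom C d z \<and> cmp C h g1 = h1 \<and> cmp C h g2 = h2"
proof -
  show "is_pullback C p c1 c2 d f1 f2 g1 g2" using wpo unfolding is_weak_pushout_def by simp
  fix z h1 h2
  assume pbz: "is_pullback C p c1 c2 z f1 f2 h1 h2"
  then have "z \<in> obj C" "h1 \<in> hom C c1 z" "h2 \<in> hom C c2 z" unfolding is_pullback_def by simp_all
  then show "\<exists>!h. h \<in> hom C d z \<and> cmp C h g1 = h1 \<and> cmp C h g2 = h2"
    using wpo pbz unfolding is_weak_pushout_def by simp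
qed

lemma PO_iff: "(r1, r2) \<in> PO C d c1 c2 \<longleftrightarrow> (\<exists>p f1 f2. is_weak_pushout C p c1 c2 d f1 f2 r1 r2)"
  by (auto simp: PO_def is_weak_pushout_def dest: is_pullbackD(3,4))

lemma PO_homs: "(r1, r2) \<in> PO C d c1 c2 \<Longrightarrow> r1 \<in> hom C c1 d \<and> r2 \<in> hom C c2 d"
  unfolding PO_def by simp

lemma is_pullback_precomp_iso:
  assumes pb: "is_pullback C p c1 c2 d f1 f2 g1 g2"
    and st1: "inverse_pair c1 e1 s1 t1" and st2: "inverse_pair c2 e2 s2 t2"
  shows "is_pullback C p e1 e2 d (cmp C s1 f1) (cmp C s2 f2) (cmp C g1 t1) (cmp C g2 t2)"
proof -
  note pbD = is_pullbackD[OF pb]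
  have s: "s1 \<in> hom C c1 e1" "s2 \<in> hom C c2 e2" and t: "t1 \<in> hom C e1 c1" "t2 \<in> hom C e2 c2"
    using st1 st2 unfolding inverse_pair_def by blast+
  have back1: "cmp C s1 v = u \<longleftrightarrow> v = cmp C t1 u" if "v \<in> hom C q c1" "u \<in> hom C q e1" for q v u
    using inverse_pair_comp_left_eq[OF st1 that] .
  have back2: "cmp C s2 v = u \<longleftrightarrow> v = cmp C t2 u" if "v \<in> hom C q c2" "u \<in> hom C q e2" for q v u
    using inverse_pair_comp_left_eq[OF st2 that] .
  have sf: "cmp C s1 f1 \<in> hom C p e1" "cmp C s2 f2 \<in> hom C p e2"
    using comp_closed pbD(1,2) s by blast+
  have tsf: "cmp C t1 (cmp C s1 f1) = f1" "cmp C t2 (cmp C s2 f2) = f2"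
    using inverse_pair_cancel_left[OF st1 pbD(1)] inverse_pair_cancel_left[OF st2 pbD(2)] by simp_all
  have rewrite: "cmp C (cmp C g1 t1) u1 = cmp C g1 (cmp C t1 u1)"
    "cmp C (cmp C g2 t2) u2 = cmp C g2 (cmp C t2 u2)"
    if "u1 \<in> hom C q e1" "u2 \<in> hom C q e2" for q u1 u2
    using comp_assoc[OF that(1) t(1) pbD(3)] comp_assoc[OF that(2) t(2) pbD(4)] by simp_all
  show ?thesis
  proof (rule is_pullbackI)
    show "cmp C (cmp C g1 t1) (cmp C s1 f1) = cmp C (cmp C g2 t2) (cmp C s2 f2)"
      using rewrite[OF sf] tsf pbD(5) by simp
  next
    fix q u1 u2
    assume u: "u1 \<in> hom C q e1" "u2 \<in> hom C q e2"
      and "cmp C (cmp C g1 t1) u1 = cmp C (cmp C g2 t2) u2"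
    then have "cmp C g1 (cmp C t1 u1) = cmp C g2 (cmp C t2 u2)" using rewrite by simp
    then have "\<exists>!w. w \<in> hom C q p \<and> cmp C f1 w = cmp C t1 u1 \<and> cmp C f2 w = cmp C t2 u2"
      using pbD(6) comp_closed u t by blast
    moreover have "cmp C (cmp C s1 f1) w = u1 \<longleftrightarrow> cmp C f1 w = cmp C t1 u1"
      "cmp C (cmp C s2 f2) w = u2 \<longleftrightarrow> cmp C f2 w = cmp C t2 u2" if w: "w \<in> hom C q p" for w
      using comp_assoc[OF w pbD(1) s(1)] comp_assoc[OF w pbD(2) s(2)]
        back1[OF comp_closed[OF w pbD(1)] u(1)] back2[OF comp_closed[OF w pbD(2)] u(2)] by simp_all
    ultimately show "\<exists>!w. w \<in> hom C q p \<and> cmp C (cmp C s1 f1) w = u1 \<and> cmp C (cmp C s2 f2) w = u2"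
      by blast
  qed (use sf comp_closed t pbD(3,4) in blast)+
qed

lemma is_weak_pushout_precomp_iso:
  assumes wpo: "is_weak_pushout C p c1 c2 d f1 f2 r1 r2"
    and st1: "inverse_pair e1 c1 s1 t1" and st2: "inverse_pair e2 c2 s2 t2"
  shows "is_weak_pushout C p e1 e2 d (cmp C t1 f1) (cmp C t2 f2) (cmp C r1 s1) (cmp C r2 s2)"
proof (rule is_weak_pushoutI)
  note pb = is_weak_pushoutD(1)[OF wpo]
  note pbD = is_pullbackD[OF pb]
  have s: "s1 \<in> hom C e1 c1" "s2 \<in> hom C e2 c2" using st1 st2 unfolding inverse_pair_def by blast+
  show "is_pullback C p e1 e2 d (cmp C t1 f1) (cmp C t2 f2) (cmp C r1 s1) (cmp C r2 s2)"
    using is_pullback_precomp_iso[OF pb inverse_pair_sym[OF st1] inverse_pair_sym[OF st2]] .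
  fix z h1 h2
  assume pbz: "is_pullback C p e1 e2 z (cmp C t1 f1) (cmp C t2 f2) h1 h2"
  have h: "h1 \<in> hom C e1 z" "h2 \<in> hom C e2 z" using is_pullbackD(3,4)[OF pbz] .
  have "is_pullback C p c1 c2 z (cmp C s1 (cmp C t1 f1)) (cmp C s2 (cmp C t2 f2)) (cmp C h1 t1) (cmp C h2 t2)"
    using is_pullback_precomp_iso[OF pbz st1 st2] .
  then have "is_pullback C p c1 c2 z f1 f2 (cmp C h1 t1) (cmp C h2 t2)"
    using inverse_pair_cancel_left[OF inverse_pair_sym[OF st1] pbD(1)]
      inverse_pair_cancel_left[OF inverse_pair_sym[OF st2] pbD(2)] by simp
  then have "\<exists>!k. k \<in> hom C d z \<and> cmp C k r1 = cmp C h1 t1 \<and> cmp C k r2 = cmp C h2 t2"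
    using is_weak_pushoutD(2)[OF wpo] by blast
  moreover have "cmp C k (cmp C r1 s1) = h1 \<longleftrightarrow> cmp C k r1 = cmp C h1 t1"
    "cmp C k (cmp C r2 s2) = h2 \<longleftrightarrow> cmp C k r2 = cmp C h2 t2" if k: "k \<in> hom C d z" for k
    using comp_assoc[OF s(1) pbD(3) k] comp_assoc[OF s(2) pbD(4) k]
      inverse_pair_comp_right_eq[OF st1 comp_closed[OF pbD(3) k] h(1)]
      inverse_pair_comp_right_eq[OF st2 comp_closed[OF pbD(4) k] h(2)] by simp_all
  ultimately show "\<exists>!k. k \<in> hom C d z \<and> cmp C k (cmp C r1 s1) = h1 \<and> cmp C k (cmp C r2 s2) = h2"
    by blast
qed

lemma PO_precomp_Aut:
  assumes r: "(r1, r2) \<in> PO C d c1 c2" and s: "s1 \<in> Aut C c1" "s2 \<in> Aut C c2"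
  shows "(cmp C r1 s1, cmp C r2 s2) \<in> PO C d c1 c2"
proof -
  obtain p f1 f2 where "is_weak_pushout C p c1 c2 d f1 f2 r1 r2" using r PO_iff by blast
  moreover obtain t1 t2 where "inverse_pair c1 c1 s1 t1" "inverse_pair c2 c2 s2 t2"
    using s Aut_inverse by metis
  ultimately have "is_weak_pushout C p c1 c2 d (cmp C t1 f1) (cmp C t2 f2) (cmp C r1 s1) (cmp C r2 s2)"
    by (rule is_weak_pushout_precomp_iso)
  then show ?thesis using PO_iff by blast
qed

lemma bal_rel_iff:
  "((h, r1, r2), (h', r1', r2')) \<in> bal_rel C d x c1 c2 \<longleftrightarrow>
     h \<in> hom C d x \<and> (r1, r2) \<in> PO C d c1 c2 \<and> h' \<in> hom C d x \<and> (r1', r2') \<in> PO C d c1 c2 \<and>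
     (\<exists>g\<in>Aut C d. h = cmp C h' g \<and> r1' = cmp C g r1 \<and> r2' = cmp C g r2)"
  unfolding bal_rel_def by simp

lemma bal_rel_equiv:
  assumes d: "d \<in> obj C"
  shows "equiv (hom C d x \<times> PO C d c1 c2) (bal_rel C d x c1 c2)"
proof (rule equivI)
  show "bal_rel C d x c1 c2 \<subseteq> (hom C d x \<times> PO C d c1 c2) \<times> (hom C d x \<times> PO C d c1 c2)"
    unfolding bal_rel_def by blast
  show "refl_on (hom C d x \<times> PO C d c1 c2) (bal_rel C d x c1 c2)"
  proof (rule refl_onI, clarify)
    fix h r1 r2 assume "h \<in> hom C d x" "(r1, r2) \<in> PO C d c1 c2"
    then show "((h, r1, r2), (h, r1, r2)) \<in> bal_rel C d x c1 c2"
      unfolding bal_rel_iff using idm_Aut[OF d] comp_idm_right comp_idm_left PO_homs by metis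
  qed
  show "sym (bal_rel C d x c1 c2)"
  proof (rule symI, clarify)
    fix h r1 r2 h' r1' r2'
    assume "((h, r1, r2), (h', r1', r2')) \<in> bal_rel C d x c1 c2"
    then obtain g where dom: "h \<in> hom C d x" "(r1, r2) \<in> PO C d c1 c2"
        "h' \<in> hom C d x" "(r1', r2') \<in> PO C d c1 c2"
      and g: "g \<in> Aut C d" "h = cmp C h' g" "r1' = cmp C g r1" "r2' = cmp C g r2"
      unfolding bal_rel_iff by blast
    obtain g' where g': "g' \<in> Aut C d" "inverse_pair d d g g'" using g(1) Aut_inverse by blast
    have "h' = cmp C h g'"
      using g(2) inverse_pair_comp_right_eq[OF g'(2) dom(3) dom(1)] by simp
    moreover have "r1 = cmp C g' r1'" "r2 = cmp C g' r2'"
      using g(3,4) PO_homs[OF dom(2)] PO_homs[OF dom(4)] inverse_pair_comp_left_eq[OF g'(2)] by blast+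
    ultimately show "((h', r1', r2'), (h, r1, r2)) \<in> bal_rel C d x c1 c2"
      unfolding bal_rel_iff using dom g'(1) by blast
  qed
  show "trans (bal_rel C d x c1 c2)"
  proof (rule transI, clarify)
    fix h r1 r2 h' r1' r2' h'' r1'' r2''
    assume "((h, r1, r2), (h', r1', r2')) \<in> bal_rel C d x c1 c2"
      and "((h', r1', r2'), (h'', r1'', r2'')) \<in> bal_rel C d x c1 c2"
    then obtain g k where dom: "h \<in> hom C d x" "(r1, r2) \<in> PO C d c1 c2"
        "h'' \<in> hom C d x" "(r1'', r2'') \<in> PO C d c1 c2"
      and g: "g \<in> Aut C d" "h = cmp C h' g" "r1' = cmp C g r1" "r2' = cmp C g r2"
      and k: "k \<in> Aut C d" "h' = cmp C h'' k" "r1'' = cmp C k r1'" "r2'' = cmp C k r2'"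
      unfolding bal_rel_iff by blast
    have "h = cmp C h'' (cmp C k g)" "r1'' = cmp C (cmp C k g) r1" "r2'' = cmp C (cmp C k g) r2"
      using g k Aut_hom comp_assoc PO_homs[OF dom(2)] dom(3) by metis+
    then show "((h, r1, r2), (h'', r1'', r2'')) \<in> bal_rel C d x c1 c2"
      unfolding bal_rel_iff using dom comp_Aut[OF k(1) g(1)] by blast
  qed
qed

lemma bal_rel_comp_eq:
  assumes "((h, r1, r2), (h', r1', r2')) \<in> bal_rel C d x c1 c2"
  shows "cmp C h r1 = cmp C h' r1'" "cmp C h r2 = cmp C h' r2'"
proof -
  obtain g where g: "g \<in> hom C d d" "h = cmp C h' g" "r1' = cmp C g r1" "r2' = cmp C g r2"
    and h': "h' \<in> hom C d x" and r: "(r1, r2) \<in> PO C d c1 c2"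
    using assms Aut_hom unfolding bal_rel_iff by blast
  have "r1 \<in> hom C c1 d" "r2 \<in> hom C c2 d" using PO_homs[OF r] by blast+
  then show "cmp C h r1 = cmp C h' r1'" "cmp C h r2 = cmp C h' r2'"
    using comp_assoc[OF _ g(1) h'] g by simp_all
qed

end

locale mono_category = small_category +
  assumes mono: "f \<in> hom C c d \<Longrightarrow> g \<in> hom C b c \<Longrightarrow> h \<in> hom C b c \<Longrightarrow>
    cmp C f g = cmp C f h \<Longrightarrow> g = h"
begin

lemma is_pullback_postcomp_mono_iff:
  assumes \<phi>: "\<phi> \<in> hom C d d'" and g: "g1 \<in> hom C c1 d" "g2 \<in> hom C c2 d"
  shows "is_pullback C p c1 c2 d f1 f2 g1 g2 \<longleftrightarrow>
    is_pullback C p c1 c2 d' f1 f2 (cmp C \<phi> g1) (cmp C \<phi> g2)"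
proof -
  have cancel: "cmp C (cmp C \<phi> g1) u1 = cmp C (cmp C \<phi> g2) u2 \<longleftrightarrow> cmp C g1 u1 = cmp C g2 u2"
    if u: "u1 \<in> hom C q c1" "u2 \<in> hom C q c2" for q u1 u2
    using comp_assoc[OF u(1) g(1) \<phi>] comp_assoc[OF u(2) g(2) \<phi>]
      mono[OF \<phi> comp_closed[OF u(1) g(1)] comp_closed[OF u(2) g(2)]] by metis
  have g': "cmp C \<phi> g1 \<in> hom C c1 d'" "cmp C \<phi> g2 \<in> hom C c2 d'" using comp_closed g \<phi> by blast+
  show ?thesis
  proof
    assume "is_pullback C p c1 c2 d f1 f2 g1 g2"
    note pbD = is_pullbackD[OF this]
    show "is_pullback C p c1 c2 d' f1 f2 (cmp C \<phi> g1) (cmp C \<phi> g2)"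
      by (rule is_pullbackI) (use pbD g' cancel in auto)
  next
    assume "is_pullback C p c1 c2 d' f1 f2 (cmp C \<phi> g1) (cmp C \<phi> g2)"
    note pbD = is_pullbackD[OF this]
    show "is_pullback C p c1 c2 d f1 f2 g1 g2"
      by (rule is_pullbackI) (use pbD g cancel in auto)
  qed
qed

lemma is_weak_pushout_jointly_epic:
  assumes wpo: "is_weak_pushout C p c1 c2 d f1 f2 r1 r2"
    and k: "k \<in> hom C d z" "k' \<in> hom C d z"
    and eq: "cmp C k r1 = cmp C k' r1" "cmp C k r2 = cmp C k' r2"
  shows "k = k'"
proof -
  note pb = is_weak_pushoutD(1)[OF wpo]
  have "is_pullback C p c1 c2 z f1 f2 (cmp C k r1) (cmp C k r2)"
    using pb is_pullback_postcomp_mono_iff[OF k(1) is_pullbackD(3,4)[OF pb]] by blast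
  then have "\<exists>!h. h \<in> hom C d z \<and> cmp C h r1 = cmp C k r1 \<and> cmp C h r2 = cmp C k r2"
    by (rule is_weak_pushoutD(2)[OF wpo])
  then show ?thesis using k eq by auto
qed

lemma is_weak_pushout_postcomp_iso:
  assumes wpo: "is_weak_pushout C p c1 c2 d f1 f2 g1 g2" and \<phi>\<psi>: "inverse_pair d d' \<phi> \<psi>"
  shows "is_weak_pushout C p c1 c2 d' f1 f2 (cmp C \<phi> g1) (cmp C \<phi> g2)"
proof (rule is_weak_pushoutI)
  note pb = is_weak_pushoutD(1)[OF wpo]
  note pbD = is_pullbackD[OF pb]
  have \<phi>: "\<phi> \<in> hom C d d'" and \<psi>: "\<psi> \<in> hom C d' d"
    using \<phi>\<psi> unfolding inverse_pair_def by blast+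
  have \<phi>g: "cmp C \<phi> g1 \<in> hom C c1 d'" "cmp C \<phi> g2 \<in> hom C c2 d'"
    using comp_closed pbD(3,4) \<phi> by blast+
  show "is_pullback C p c1 c2 d' f1 f2 (cmp C \<phi> g1) (cmp C \<phi> g2)"
    using pb is_pullback_postcomp_mono_iff[OF \<phi> pbD(3,4)] by blast
  fix z h1 h2
  assume pbz: "is_pullback C p c1 c2 z f1 f2 h1 h2"
  obtain k where k: "k \<in> hom C d z" "cmp C k g1 = h1" "cmp C k g2 = h2"
    using is_weak_pushoutD(2)[OF wpo pbz] by blast
  have exists: "cmp C (cmp C k \<psi>) (cmp C \<phi> g1) = h1" "cmp C (cmp C k \<psi>) (cmp C \<phi> g2) = h2"
    using comp_assoc[OF \<phi>g(1) \<psi> k(1)] comp_assoc[OF \<phi>g(2) \<psi> k(1)] k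
      inverse_pair_cancel_left[OF \<phi>\<psi> pbD(3)] inverse_pair_cancel_left[OF \<phi>\<psi> pbD(4)] by simp_all
  have unique: "m = m'"
    if m: "m \<in> hom C d' z" "m' \<in> hom C d' z"
      and eq: "cmp C m (cmp C \<phi> g1) = cmp C m' (cmp C \<phi> g1)" "cmp C m (cmp C \<phi> g2) = cmp C m' (cmp C \<phi> g2)"
    for m m'
  proof -
    have "cmp C m \<phi> = cmp C m' \<phi>"
      using is_weak_pushout_jointly_epic[OF wpo comp_closed[OF \<phi> m(1)] comp_closed[OF \<phi> m(2)]]
        comp_assoc[OF pbD(3) \<phi> m(1)] comp_assoc[OF pbD(3) \<phi> m(2)]
        comp_assoc[OF pbD(4) \<phi> m(1)] comp_assoc[OF pbD(4) \<phi> m(2)] eq by simp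
    then show ?thesis
      using inverse_pair_comp_right_eq[OF \<phi>\<psi> m(1) comp_closed[OF \<phi> m(2)]]
        inverse_pair_comp_right_eq[OF \<phi>\<psi> m(2) comp_closed[OF \<phi> m(2)]] by simp
  qed
  show "\<exists>!m. m \<in> hom C d' z \<and> cmp C m (cmp C \<phi> g1) = h1 \<and> cmp C m (cmp C \<phi> g2) = h2"
  proof (rule ex1I[of _ "cmp C k \<psi>"])
    show "cmp C k \<psi> \<in> hom C d' z \<and> cmp C (cmp C k \<psi>) (cmp C \<phi> g1) = h1 \<and>
        cmp C (cmp C k \<psi>) (cmp C \<phi> g2) = h2"
      using comp_closed[OF \<psi> k(1)] exists by simp
  next
    fix m
    assume "m \<in> hom C d' z \<and> cmp C m (cmp C \<phi> g1) = h1 \<and> cmp C m (cmp C \<phi> g2) = h2"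
    then show "m = cmp C k \<psi>" using unique[of m "cmp C k \<psi>"] comp_closed[OF \<psi> k(1)] exists by simp
  qed
qed

lemma PO_factorization_unique:
  assumes h: "h \<in> hom C d x" and r: "(r1, r2) \<in> PO C d c1 c2"
    and h': "h' \<in> hom C d' x" and r': "(r1', r2') \<in> PO C d' c1 c2"
    and eq: "cmp C h r1 = cmp C h' r1'" "cmp C h r2 = cmp C h' r2'"
  obtains v where "is_iso C d d' v" "cmp C v r1 = r1'" "cmp C v r2 = r2'" "h = cmp C h' v"
proof -
  obtain p f1 f2 where wpo: "is_weak_pushout C p c1 c2 d f1 f2 r1 r2" using r PO_iff by blast
  obtain p' f1' f2' where wpo': "is_weak_pushout C p' c1 c2 d' f1' f2' r1' r2'" using r' PO_iff by blast
  have rh: "r1 \<in> hom C c1 d" "r2 \<in> hom C c2 d" and rh': "r1' \<in> hom C c1 d'" "r2' \<in> hom C c2 d'"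
    using PO_homs r r' by blast+
  have d: "d \<in> obj C" "d' \<in> obj C" using rh rh' hom_objs by blast+
  \<comment> \<open>h and h' are monic, so (r1, r2) and (r1', r2') have the same pullback squares\<close>
  have transfer: "is_pullback C q c1 c2 d e1 e2 r1 r2 \<longleftrightarrow> is_pullback C q c1 c2 d' e1 e2 r1' r2'"
    for q e1 e2
    using is_pullback_postcomp_mono_iff[OF h rh] is_pullback_postcomp_mono_iff[OF h' rh'] eq by simp
  obtain v where v: "v \<in> hom C d d'" "cmp C v r1 = r1'" "cmp C v r2 = r2'"
    using is_weak_pushoutD(2)[OF wpo] is_weak_pushoutD(1)[OF wpo] transfer by blast
  obtain u where u: "u \<in> hom C d' d" "cmp C u r1' = r1" "cmp C u r2' = r2"
    using is_weak_pushoutD(2)[OF wpo'] is_weak_pushoutD(1)[OF wpo'] transfer by blast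
  have "cmp C u v = idm C d"
    using is_weak_pushout_jointly_epic[OF wpo comp_closed[OF v(1) u(1)] idm_closed[OF d(1)]]
      comp_assoc[OF rh(1) v(1) u(1)] comp_assoc[OF rh(2) v(1) u(1)] u v
      comp_idm_left[OF rh(1)] comp_idm_left[OF rh(2)] by simp
  moreover have "cmp C v u = idm C d'"
    using is_weak_pushout_jointly_epic[OF wpo' comp_closed[OF u(1) v(1)] idm_closed[OF d(2)]]
      comp_assoc[OF rh'(1) u(1) v(1)] comp_assoc[OF rh'(2) u(1) v(1)] u v
      comp_idm_left[OF rh'(1)] comp_idm_left[OF rh'(2)] by simp
  ultimately have "is_iso C d d' v" unfolding is_iso_def using u(1) v(1) by blast
  moreover have "h = cmp C h' v"
    using is_weak_pushout_jointly_epic[OF wpo h comp_closed[OF v(1) h']]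
      comp_assoc[OF rh(1) v(1) h'] comp_assoc[OF rh(2) v(1) h'] v eq by simp
  ultimately show ?thesis using that v by blast
qed

end

locale weak_pushout_category = mono_category +
  assumes has_pullbacks: "g1 \<in> hom C c1 d \<Longrightarrow> g2 \<in> hom C c2 d \<Longrightarrow>
      \<exists>p f1 f2. is_pullback C p c1 c2 d f1 f2 g1 g2"
    and has_weak_pushouts: "f1 \<in> hom C p c1 \<Longrightarrow> f2 \<in> hom C p c2 \<Longrightarrow>
      \<exists>d g1 g2. is_weak_pushout C p c1 c2 d f1 f2 g1 g2"
begin

lemma PO_factorization_exists:
  assumes a: "a1 \<in> hom C c1 x" "a2 \<in> hom C c2 x"
  obtains d h r1 r2 where "h \<in> hom C d x" "(r1, r2) \<in> PO C d c1 c2"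
    "cmp C h r1 = a1" "cmp C h r2 = a2"
proof -
  obtain p f1 f2 where pb: "is_pullback C p c1 c2 x f1 f2 a1 a2" using has_pullbacks a by blast
  obtain d r1 r2 where wpo: "is_weak_pushout C p c1 c2 d f1 f2 r1 r2"
    using has_weak_pushouts is_pullbackD(1,2)[OF pb] by blast
  then obtain h where "h \<in> hom C d x" "cmp C h r1 = a1" "cmp C h r2 = a2"
    using is_weak_pushoutD(2)[OF wpo pb] by blast
  moreover have "(r1, r2) \<in> PO C d c1 c2" using wpo PO_iff by blast
  ultimately show ?thesis using that by blast
qed

end

lemma FI_type_weak_pushout_category:
  assumes FI: "FI_type C"
  shows "weak_pushout_category C"
proof -
  interpret small_category C using FI unfolding FI_type_def by unfold_locales blast
  have mono: "\<forall>b\<in>obj C. \<forall>c\<in>obj C. \<forall>d\<in>obj C. \<forall>f\<in>hom C c d. \<forall>g\<in>hom C b c. \<forall>h\<in>hom C b c.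
      cmp C f g = cmp C f h \<longrightarrow> g = h"
    using FI unfolding FI_type_def by (elim conjE) assumption
  have pullbacks: "\<forall>c1\<in>obj C. \<forall>c2\<in>obj C. \<forall>d\<in>obj C. \<forall>g1\<in>hom C c1 d. \<forall>g2\<in>hom C c2 d.
      \<exists>p f1 f2. is_pullback C p c1 c2 d f1 f2 g1 g2"
    using FI unfolding FI_type_def by (elim conjE) assumption
  have weak_pushouts: "\<forall>p\<in>obj C. \<forall>c1\<in>obj C. \<forall>c2\<in>obj C. \<forall>f1\<in>hom C p c1. \<forall>f2\<in>hom C p c2.
      \<exists>d g1 g2. is_weak_pushout C p c1 c2 d f1 f2 g1 g2"
    using FI unfolding FI_type_def by (elim conjE) assumption
  show ?thesis
  proof unfold_locales
    fix f c d g b h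
    assume "f \<in> hom C c d" "g \<in> hom C b c" "h \<in> hom C b c" "cmp C f g = cmp C f h"
    then show "g = h" using mono hom_objs by meson
  next
    fix g1 c1 d g2 c2
    assume "g1 \<in> hom C c1 d" "g2 \<in> hom C c2 d"
    then show "\<exists>p f1 f2. is_pullback C p c1 c2 d f1 f2 g1 g2" using pullbacks hom_objs by meson
  next
    fix f1 p c1 f2 c2
    assume "f1 \<in> hom C p c1" "f2 \<in> hom C p c2"
    then show "\<exists>d g1 g2. is_weak_pushout C p c1 c2 d f1 f2 g1 g2" using weak_pushouts hom_objs by meson
  qed
qed


locale PO_decomposition = weak_pushout_category C for C :: "('o, 'm) category" +
  fixes R :: "'o set" and c1 c2 :: 'o
  assumes rep_system: "rep_system C R"
begin

definition PO_factorizations :: "'o \<Rightarrow> 'm \<times> 'm \<Rightarrow> ('o \<times> 'm \<times> 'm \<times> 'm) set" where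
  "PO_factorizations x a = {(d, h, r1, r2). d \<in> R \<and> h \<in> hom C d x \<and> (r1, r2) \<in> PO C d c1 c2 \<and>
     cmp C h r1 = fst a \<and> cmp C h r2 = snd a}"

definition PO_decomp :: "'o \<Rightarrow> 'm \<times> 'm \<Rightarrow> 'o \<times> ('m \<times> 'm \<times> 'm) set" where
  "PO_decomp x a = (case SOME t. t \<in> PO_factorizations x a of
     (d, h, r1, r2) \<Rightarrow> (d, bal_class C d x c1 c2 (h, r1, r2)))"

lemma R_obj: "d \<in> R \<Longrightarrow> d \<in> obj C"
  using rep_system unfolding rep_system_def by blast

lemma PO_factorizations_nonempty:
  assumes a: "a1 \<in> hom C c1 x" "a2 \<in> hom C c2 x"
  obtains t where "t \<in> PO_factorizations x (a1, a2)"
proof -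
  obtain d0 h0 r1 r2 where h0: "h0 \<in> hom C d0 x" and r: "(r1, r2) \<in> PO C d0 c1 c2"
    and fact: "cmp C h0 r1 = a1" "cmp C h0 r2 = a2"
    by (rule PO_factorization_exists[OF a])
  obtain p f1 f2 where wpo: "is_weak_pushout C p c1 c2 d0 f1 f2 r1 r2" using r PO_iff by blast
  have rh: "r1 \<in> hom C c1 d0" "r2 \<in> hom C c2 d0" using PO_homs[OF r] by blast+
  obtain d where d: "d \<in> R" "iso_objs C d0 d"
    using rep_system hom_objs[OF h0] unfolding rep_system_def by blast
  then obtain \<phi> \<psi> where \<phi>\<psi>: "inverse_pair d0 d \<phi> \<psi>"
    unfolding iso_objs_def is_iso_iff_inverse_pair by blast
  then have \<phi>: "\<phi> \<in> hom C d0 d" and \<psi>: "\<psi> \<in> hom C d d0" unfolding inverse_pair_def by blast+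
  have "(cmp C \<phi> r1, cmp C \<phi> r2) \<in> PO C d c1 c2"
    using is_weak_pushout_postcomp_iso[OF wpo \<phi>\<psi>] PO_iff by blast
  moreover have "cmp C (cmp C h0 \<psi>) (cmp C \<phi> r1) = a1" "cmp C (cmp C h0 \<psi>) (cmp C \<phi> r2) = a2"
    using inverse_pair_cancel_left[OF \<phi>\<psi> rh(1)] inverse_pair_cancel_left[OF \<phi>\<psi> rh(2)] fact
      comp_assoc[OF comp_closed[OF rh(1) \<phi>] \<psi> h0] comp_assoc[OF comp_closed[OF rh(2) \<phi>] \<psi> h0]
    by simp_all
  ultimately have "(d, cmp C h0 \<psi>, cmp C \<phi> r1, cmp C \<phi> r2) \<in> PO_factorizations x (a1, a2)"
    unfolding PO_factorizations_def using d(1) comp_closed[OF \<psi> h0] by simp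
  then show ?thesis using that by blast
qed

lemma PO_factorizations_unique:
  assumes t: "(d, h, r1, r2) \<in> PO_factorizations x a"
    and t': "(d', h', r1', r2') \<in> PO_factorizations x a"
  shows "d' = d" "((h, r1, r2), (h', r1', r2')) \<in> bal_rel C d x c1 c2"
proof -
  have dom: "d \<in> R" "h \<in> hom C d x" "(r1, r2) \<in> PO C d c1 c2"
    "d' \<in> R" "h' \<in> hom C d' x" "(r1', r2') \<in> PO C d' c1 c2"
    and eq: "cmp C h r1 = cmp C h' r1'" "cmp C h r2 = cmp C h' r2'"
    using t t' unfolding PO_factorizations_def by auto
  obtain v where v: "is_iso C d d' v" "cmp C v r1 = r1'" "cmp C v r2 = r2'" "h = cmp C h' v"
    using PO_factorization_unique[OF dom(2,3,5,6) eq] .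
  show "d' = d" using rep_system dom(1,4) v(1) unfolding rep_system_def iso_objs_def by blast
  then have "v \<in> Aut C d" using v(1) unfolding Aut_def by simp
  then show "((h, r1, r2), (h', r1', r2')) \<in> bal_rel C d x c1 c2"
    unfolding bal_rel_iff using dom v \<open>d' = d\<close> by blast
qed

lemma PO_decomp_eq:
  assumes t: "(d, h, r1, r2) \<in> PO_factorizations x a"
  shows "PO_decomp x a = (d, bal_class C d x c1 c2 (h, r1, r2))"
proof -
  obtain d0 h0 r10 r20 where t0: "(SOME t. t \<in> PO_factorizations x a) = (d0, h0, r10, r20)"
    by (metis prod_cases4)
  have "(d0, h0, r10, r20) \<in> PO_factorizations x a" using someI[of _ "(d, h, r1, r2)"] t t0 by metis
  then have "d0 = d" and rel: "((h, r1, r2), (h0, r10, r20)) \<in> bal_rel C d x c1 c2"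
    using PO_factorizations_unique[OF t] by blast+
  moreover have "equiv (hom C d x \<times> PO C d c1 c2) (bal_rel C d x c1 c2)"
    using t R_obj bal_rel_equiv unfolding PO_factorizations_def by blast
  then have "bal_class C d x c1 c2 (h0, r10, r20) = bal_class C d x c1 c2 (h, r1, r2)"
    unfolding bal_class_def using equiv_class_eq[OF _ rel] by simp
  ultimately show ?thesis unfolding PO_decomp_def t0 by simp
qed

lemma PO_decomp_eqD:
  assumes a: "a1 \<in> hom C c1 x" "a2 \<in> hom C c2 x"
    and decomp: "PO_decomp x (a1, a2) = (d, bal_class C d x c1 c2 (h, r1, r2))"
  shows "(d, h, r1, r2) \<in> PO_factorizations x (a1, a2)"
proof -
  obtain d0 h0 r10 r20 where t0: "(d0, h0, r10, r20) \<in> PO_factorizations x (a1, a2)"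
    using PO_factorizations_nonempty[OF a] by (metis prod_cases4)
  then have d0: "d0 \<in> R" "(h0, r10, r20) \<in> hom C d0 x \<times> PO C d0 c1 c2"
    and fact: "cmp C h0 r10 = a1" "cmp C h0 r20 = a2"
    unfolding PO_factorizations_def by auto
  have "d = d0" and cls: "bal_class C d x c1 c2 (h, r1, r2) = bal_class C d x c1 c2 (h0, r10, r20)"
    using decomp PO_decomp_eq[OF t0] by auto
  have "(h0, r10, r20) \<in> bal_class C d x c1 c2 (h0, r10, r20)"
    unfolding bal_class_def using equiv_class_self[OF bal_rel_equiv[OF R_obj[OF d0(1)]] d0(2)] \<open>d = d0\<close>
    by simp
  then have "(h0, r10, r20) \<in> bal_class C d x c1 c2 (h, r1, r2)" using cls by simp
  then have rel: "((h, r1, r2), (h0, r10, r20)) \<in> bal_rel C d x c1 c2"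
    unfolding bal_class_def by simp
  then show ?thesis
    unfolding PO_factorizations_def using bal_rel_comp_eq[OF rel] fact d0(1) \<open>d = d0\<close>
    unfolding bal_rel_iff by simp
qed

lemma bij_betw_PO_decomp: "bij_betw (PO_decomp x) (hom C c1 x \<times> hom C c2 x) (coprod_PO C R c1 c2 x)"
proof (rule bij_betw_imageI)
  show "inj_on (PO_decomp x) (hom C c1 x \<times> hom C c2 x)"
  proof (rule inj_onI, clarify)
    fix a1 a2 b1 b2
    assume a: "a1 \<in> hom C c1 x" "a2 \<in> hom C c2 x" and b: "b1 \<in> hom C c1 x" "b2 \<in> hom C c2 x"
      and eq: "PO_decomp x (a1, a2) = PO_decomp x (b1, b2)"
    obtain d h r1 r2 where t: "(d, h, r1, r2) \<in> PO_factorizations x (a1, a2)"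
      using PO_factorizations_nonempty[OF a] by (metis prod_cases4)
    then have "(d, h, r1, r2) \<in> PO_factorizations x (b1, b2)"
      using PO_decomp_eqD[OF b] PO_decomp_eq[OF t] eq by simp
    with t show "a1 = b1 \<and> a2 = b2" unfolding PO_factorizations_def by simp
  qed
  show "PO_decomp x ` (hom C c1 x \<times> hom C c2 x) = coprod_PO C R c1 c2 x"
  proof (intro equalityI subsetI)
    fix y assume "y \<in> PO_decomp x ` (hom C c1 x \<times> hom C c2 x)"
    then obtain a1 a2 where a: "a1 \<in> hom C c1 x" "a2 \<in> hom C c2 x" and y: "y = PO_decomp x (a1, a2)"
      by blast
    obtain d h r1 r2 where t: "(d, h, r1, r2) \<in> PO_factorizations x (a1, a2)"
      using PO_factorizations_nonempty[OF a] by (metis prod_cases4)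
    then have "bal_class C d x c1 c2 (h, r1, r2) \<in> balanced_prod C d x c1 c2"
      unfolding bal_class_def balanced_prod_def PO_factorizations_def by (auto intro: quotientI)
    then show "y \<in> coprod_PO C R c1 c2 x"
      using t y PO_decomp_eq[OF t] unfolding coprod_PO_def PO_factorizations_def by simp
  next
    fix y assume "y \<in> coprod_PO C R c1 c2 x"
    then obtain d h r1 r2 where d: "d \<in> R" and dom: "h \<in> hom C d x" "(r1, r2) \<in> PO C d c1 c2"
      and y: "y = (d, bal_class C d x c1 c2 (h, r1, r2))"
      unfolding coprod_PO_def balanced_prod_def bal_class_def by (auto elim!: quotientE)
    then have "(d, h, r1, r2) \<in> PO_factorizations x (cmp C h r1, cmp C h r2)"
      unfolding PO_factorizations_def by simp
    then have "y = PO_decomp x (cmp C h r1, cmp C h r2)" using PO_decomp_eq y by simp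
    moreover have "(cmp C h r1, cmp C h r2) \<in> hom C c1 x \<times> hom C c2 x"
      using PO_homs[OF dom(2)] comp_closed dom(1) by blast
    ultimately show "y \<in> PO_decomp x ` (hom C c1 x \<times> hom C c2 x)" by blast
  qed
qed

lemma PO_decomp_natural:
  assumes f: "f \<in> hom C x y" and a: "a1 \<in> hom C c1 x" "a2 \<in> hom C c2 x"
    and decomp: "PO_decomp x (a1, a2) = (d, bal_class C d x c1 c2 (h, r1, r2))"
  shows "PO_decomp y (cmp C f a1, cmp C f a2) = (d, bal_class C d y c1 c2 (cmp C f h, r1, r2))"
proof -
  have t: "(d, h, r1, r2) \<in> PO_factorizations x (a1, a2)" using PO_decomp_eqD[OF a decomp] .
  then have "h \<in> hom C d x" "r1 \<in> hom C c1 d" "r2 \<in> hom C c2 d"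
    unfolding PO_factorizations_def using PO_homs by auto
  then have "(d, cmp C f h, r1, r2) \<in> PO_factorizations y (cmp C f a1, cmp C f a2)"
    using t f comp_closed comp_assoc unfolding PO_factorizations_def by auto
  then show ?thesis by (rule PO_decomp_eq)
qed

lemma PO_decomp_equivariant:
  assumes a: "a1 \<in> hom C c1 x" "a2 \<in> hom C c2 x" and s: "s1 \<in> Aut C c1" "s2 \<in> Aut C c2"
    and decomp: "PO_decomp x (a1, a2) = (d, bal_class C d x c1 c2 (h, r1, r2))"
  shows "PO_decomp x (cmp C a1 s1, cmp C a2 s2) =
    (d, bal_class C d x c1 c2 (h, cmp C r1 s1, cmp C r2 s2))"
proof -
  have t: "(d, h, r1, r2) \<in> PO_factorizations x (a1, a2)" using PO_decomp_eqD[OF a decomp] .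
  then have h: "h \<in> hom C d x" and r: "(r1, r2) \<in> PO C d c1 c2"
    unfolding PO_factorizations_def by auto
  have "cmp C h (cmp C r1 s1) = cmp C (cmp C h r1) s1" "cmp C h (cmp C r2 s2) = cmp C (cmp C h r2) s2"
    using comp_assoc[OF Aut_hom[OF s(1)] _ h] comp_assoc[OF Aut_hom[OF s(2)] _ h] PO_homs[OF r] by blast+
  then have "(d, h, cmp C r1 s1, cmp C r2 s2) \<in> PO_factorizations x (cmp C a1 s1, cmp C a2 s2)"
    using t PO_precomp_Aut[OF r s] unfolding PO_factorizations_def by auto
  then show ?thesis by (rule PO_decomp_eq)
qed

end

theorem mainTheorem9:
  fixes C :: "('o, 'm) category" and c1 c2 :: 'o and R :: "'o set"
  assumes "FI_type C" and "c1 \<in> obj C" and "c2 \<in> obj C" and "rep_system C R"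
  shows "\<exists>\<Phi> :: 'o \<Rightarrow> 'm \<times> 'm \<Rightarrow> 'o \<times> ('m \<times> ('m \<times> 'm)) set.
     (\<forall>x\<in>obj C. bij_betw (\<Phi> x) (hom C c1 x \<times> hom C c2 x) (coprod_PO C R c1 c2 x)) \<and>
     (\<forall>x\<in>obj C. \<forall>y\<in>obj C. \<forall>f\<in>hom C x y. \<forall>a1\<in>hom C c1 x. \<forall>a2\<in>hom C c2 x.
        \<forall>d h r1 r2. \<Phi> x (a1, a2) = (d, bal_class C d x c1 c2 (h, (r1, r2))) \<longrightarrow>
          \<Phi> y (cmp C f a1, cmp C f a2) = (d, bal_class C d y c1 c2 (cmp C f h, (r1, r2)))) \<and>
     (\<forall>x\<in>obj C. \<forall>a1\<in>hom C c1 x. \<forall>a2\<in>hom C c2 x. \<forall>s1\<in>Aut C c1. \<forall>s2\<in>Aut C c2.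
        \<forall>d h r1 r2. \<Phi> x (a1, a2) = (d, bal_class C d x c1 c2 (h, (r1, r2))) \<longrightarrow>
          \<Phi> x (cmp C a1 s1, cmp C a2 s2) =
            (d, bal_class C d x c1 c2 (h, (cmp C r1 s1, cmp C r2 s2))))"
proof -
  interpret weak_pushout_category C using FI_type_weak_pushout_category[OF assms(1)] .
  interpret PO_decomposition C R c1 c2 using assms(4) by unfold_locales
  show ?thesis
  proof (intro exI[of _ PO_decomp] conjI ballI allI impI)
    show "bij_betw (PO_decomp x) (hom C c1 x \<times> hom C c2 x) (coprod_PO C R c1 c2 x)" for x
      by (rule bij_betw_PO_decomp)
  qed (erule PO_decomp_natural PO_decomp_equivariant; assumption)+
qed

end
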